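(* Fix a contact vector $\mathsf V\in\mathbb Z^n$ and a stable weighted dual graph $\mathsf G$ of genus $g$ with $n$ legs, with moduli cone $\sigma_{\mathsf G}=\mathbb R_{\ge0}^{E(\mathsf G)}$. Then the closure of the set of points of $\sigma_{\mathsf G}$ that lie in $\mathsf{DR}_g(\mathsf V)^{\mathrm{trop}}_{\#}$ and have a fixed rubber combinatorial type is a simplicial cone.
   Context: A point $p$ in the interior of $\sigma_{\mathsf G}$ gives a tropical curve $\Gamma_p$ (metric realization of $\mathsf G$ with edge lengths from $p$ and infinite legs). A balanced function with slopes $\mathsf V$ on it is a continuous function to $\mathbb R$, linear with integer slope on edges, with outgoing slopes summing to $0$ at every vertex, and slope $\mathsf V_j$ along leg $j$; it is unique up to additive constant if it exists. $\mathsf{DR}_g(\mathsf V)^{\mathrm{trop}}_{\#}\subset\mathcal M^{\mathrm{trop}}_{g,n}$ is the closure of the locus of tropical curves admitting such a function. For such $p$ and function $F$: the target graph $T$ is the subdivision of $\mathbb R$ with vertices at images of vertices of $\Gamma_p$; the semistable source graph $\Gamma$ is obtained by subdividing $\Gamma_p$ at preimages of the vertices of $T$ (new vertices of genus $0$); the rubber combinatorial type is the data of $\Gamma$, $T$, the graph map $\Gamma\to T$, and the slopes on edges and legs of $\Gamma$. *)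

theory Defs
  imports "HOL-Analysis.Analysis"
begin

text \<open>
A weighted dual graph with n legs is given by a finite vertex set Vs, an edge set E
(a subset of a finite type 'e, so that the moduli cone lives in real^'e),
endpoint maps src/tgt (an arbitrary reference orientation of each edge; loops allowed,
multi-edges allowed), genus weights h, and leg attachments leg j for j < n.
\<close>

definition stable_graph ::
  "'v set \<Rightarrow> 'e set \<Rightarrow> ('e \<Rightarrow> 'v) \<Rightarrow> ('e \<Rightarrow> 'v) \<Rightarrow> ('v \<Rightarrow> nat) \<Rightarrow> (nat \<Rightarrow> 'v) \<Rightarrow> nat \<Rightarrow> nat \<Rightarrow> bool"
where
  "stable_graph Vs E src tgt h leg n g \<longleftrightarrow>
     finite Vs \<and> finite E \<and> Vs \<noteq> {} \<and>
     (\<forall>e\<in>E. src e \<in> Vs \<and> tgt e \<in> Vs) \<and>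
     (\<forall>j<n. leg j \<in> Vs) \<and>
     (\<forall>u\<in>Vs. \<forall>w\<in>Vs. (u, w) \<in> ({(src e, tgt e) | e. e \<in> E} \<union> {(tgt e, src e) | e. e \<in> E})\<^sup>*) \<and>
     int (card E) - int (card Vs) + 1 + (\<Sum>v\<in>Vs. int (h v)) = int g \<and>
     (\<forall>v\<in>Vs. 2 * int (h v) - 2
        + int (card {e\<in>E. src e = v}) + int (card {e\<in>E. tgt e = v})
        + int (card {j. j < n \<and> leg j = v}) > 0)"

definition moduli_cone :: "'e set \<Rightarrow> (real ^ 'e) set" where
  "moduli_cone E = {p. \<forall>e. (e \<in> E \<longrightarrow> 0 \<le> p $ e) \<and> (e \<notin> E \<longrightarrow> p $ e = 0)}"

definition cone_interior :: "'e set \<Rightarrow> (real ^ 'e) set" where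
  "cone_interior E = {p. \<forall>e. (e \<in> E \<longrightarrow> 0 < p $ e) \<and> (e \<notin> E \<longrightarrow> p $ e = 0)}"

text \<open>
A balanced function on the tropical curve Gamma_p: a continuous function, linear with
integer slope on each edge, is determined by its vertex values f and its slopes s
(slope of edge e measured from src e towards tgt e); on leg j it has slope Vv j
(outgoing).
\<close>

definition balanced ::
  "'v set \<Rightarrow> 'e set \<Rightarrow> ('e \<Rightarrow> 'v) \<Rightarrow> ('e \<Rightarrow> 'v) \<Rightarrow> (nat \<Rightarrow> 'v) \<Rightarrow> nat \<Rightarrow> (nat \<Rightarrow> int)
     \<Rightarrow> real ^ 'e \<Rightarrow> ('v \<Rightarrow> real) \<Rightarrow> ('e \<Rightarrow> int) \<Rightarrow> bool"
where
  "balanced Vs E src tgt leg n Vv p f s \<longleftrightarrow>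
     (\<forall>e\<in>E. f (tgt e) - f (src e) = of_int (s e) * p $ e) \<and>
     (\<forall>v\<in>Vs. (\<Sum>e\<in>{e\<in>E. src e = v}. s e) - (\<Sum>e\<in>{e\<in>E. tgt e = v}. s e)
              + (\<Sum>j\<in>{j. j < n \<and> leg j = v}. Vv j) = 0)"

text \<open>Canonical names for the vertices/edges of the semistable source graph and
cells of the target graph T (T has vertices 0..k-1 in increasing order of their value
in R, bounded edges TEdge i between i and i+1, and two unbounded ends).\<close>

datatype ('v, 'e) svert = OrigV 'v | SubE 'e nat | SubL nat nat
datatype 'e sedge = EPiece 'e nat | LPiece nat nat | LEnd nat
datatype timg = TVert nat | TEdge nat | TLegPos | TLegNeg

definition trank :: "('v \<Rightarrow> real) \<Rightarrow> 'v set \<Rightarrow> real \<Rightarrow> nat" where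
  "trank f Vs x = card {y \<in> f ` Vs. y < x}"

text \<open>
The rubber combinatorial type: the number k of vertices of T; the vertices of the
subdivided source graph Gamma with their genus and image in T; the (bounded) edges of
Gamma with their endpoints (oriented as in G, resp. outwards along legs), image in T
and slope; and the legs of Gamma with attachment vertex, image in T and slope.
\<close>

definition rubber_type ::
  "'v set \<Rightarrow> 'e set \<Rightarrow> ('e \<Rightarrow> 'v) \<Rightarrow> ('e \<Rightarrow> 'v) \<Rightarrow> ('v \<Rightarrow> nat) \<Rightarrow> (nat \<Rightarrow> 'v) \<Rightarrow> nat
     \<Rightarrow> (nat \<Rightarrow> int) \<Rightarrow> ('v \<Rightarrow> real) \<Rightarrow> ('e \<Rightarrow> int)
     \<Rightarrow> nat \<times> (('v,'e) svert \<times> nat \<times> nat) set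
          \<times> ('e sedge \<times> ('v,'e) svert \<times> ('v,'e) svert \<times> timg \<times> int) set
          \<times> ('e sedge \<times> ('v,'e) svert \<times> timg \<times> int) set"
where
  "rubber_type Vs E src tgt h leg n Vv f s =
    (let k = card (f ` Vs);
         r = (\<lambda>v. trank f Vs (f v));
         ep = (\<lambda>e i. if i = r (src e) then OrigV (src e)
                      else if i = r (tgt e) then OrigV (tgt e) else SubE e i);
         lp = (\<lambda>j i. if i = r (leg j) then OrigV (leg j) else SubL j i);
         SV = {(OrigV v, h v, r v) | v. v \<in> Vs}
            \<union> {(SubE e i, 0, i) | e i. e \<in> E \<and> min (r (src e)) (r (tgt e)) < i
                                        \<and> i < max (r (src e)) (r (tgt e))}
            \<union> {(SubL j i, 0, i) | j i. j < n \<and>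
                   ((0 < Vv j \<and> r (leg j) < i \<and> i < k) \<or> (Vv j < 0 \<and> i < r (leg j)))};
         SE = {(EPiece e 0, OrigV (src e), OrigV (tgt e), TVert (r (src e)), 0) | e. e \<in> E \<and> s e = 0}
            \<union> {(EPiece e i, ep e i, ep e (Suc i), TEdge i, s e) | e i.
                   e \<in> E \<and> 0 < s e \<and> r (src e) \<le> i \<and> i < r (tgt e)}
            \<union> {(EPiece e i, ep e (Suc i), ep e i, TEdge i, s e) | e i.
                   e \<in> E \<and> s e < 0 \<and> r (tgt e) \<le> i \<and> i < r (src e)}
            \<union> {(LPiece j i, lp j i, lp j (Suc i), TEdge i, Vv j) | j i.
                   j < n \<and> 0 < Vv j \<and> r (leg j) \<le> i \<and> Suc i < k}
            \<union> {(LPiece j i, lp j (Suc i), lp j i, TEdge i, Vv j) | j i.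
                   j < n \<and> Vv j < 0 \<and> i < r (leg j)};
         SL = {(LEnd j, lp j (k - 1), TLegPos, Vv j) | j. j < n \<and> 0 < Vv j}
            \<union> {(LEnd j, lp j 0, TLegNeg, Vv j) | j. j < n \<and> Vv j < 0}
            \<union> {(LEnd j, OrigV (leg j), TVert (r (leg j)), 0) | j. j < n \<and> Vv j = 0}
     in (k, SV, SE, SL))"

definition simplicial_cone :: "'a::real_vector set \<Rightarrow> bool" where
  "simplicial_cone C \<longleftrightarrow>
     (\<exists>B. finite B \<and> independent B \<and> C = {\<Sum>b\<in>B. c b *\<^sub>R b | c. \<forall>b\<in>B. 0 \<le> c b})"

end

theory Submission
  imports Defs
begin

(* A point p of the locus, together with its balanced function, is determined by the lengths of
   the bounded edges of the target graph T and the lengths of the edges of slope 0: an edge of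
   slope s \<noteq> 0 stretched over the edges i, ..., j-1 of T has length (sum of their lengths) / |s|.
   Conversely every positive choice of these lengths gives a balanced function with the same
   rubber type. So the locus is the image of an open orthant under a linear map, which is
   injective because G is connected, and its closure is the simplicial cone spanned by the
   images of the coordinate vectors. *)

lemma sum_nonneg_scaleR_in_convex_cone_hull:
  fixes w :: "'i \<Rightarrow> 'a::real_vector"
  assumes "finite A" "A \<subseteq> I" "\<forall>x\<in>A. 0 \<le> c x"
  shows "(\<Sum>x\<in>A. c x *\<^sub>R w x) \<in> convex_cone hull (w ` I)"
  using assms
proof (induction A rule: finite_induct)
  case empty
  then show ?case by (simp add: convex_cone_hull_contains_0)
next
  case (insert x F)
  then have "c x *\<^sub>R w x \<in> convex_cone hull (w ` I)"
    by (simp add: hull_inc convex_cone_hull_mul)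
  with insert show ?case by (simp add: convex_cone_hull_add)
qed

lemma nonneg_combinations_eq_convex_cone_hull:
  fixes w :: "'i \<Rightarrow> 'a::real_vector"
  assumes "finite I"
  shows "{\<Sum>x\<in>I. c x *\<^sub>R w x | c. \<forall>x\<in>I. 0 \<le> c x} = convex_cone hull (w ` I)" (is "?C = _")
proof
  show "?C \<subseteq> convex_cone hull (w ` I)"
    using sum_nonneg_scaleR_in_convex_cone_hull[OF assms] by blast
  have "convex_cone ?C"
    unfolding convex_cone_iff
  proof (intro conjI ballI allI impI)
    show "0 \<in> ?C" by (auto intro!: exI[of _ "\<lambda>_. 0"])
  next
    fix x y assume "x \<in> ?C" "y \<in> ?C"
    then obtain a b where "x = (\<Sum>z\<in>I. a z *\<^sub>R w z)" "\<forall>z\<in>I. 0 \<le> a z"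
      "y = (\<Sum>z\<in>I. b z *\<^sub>R w z)" "\<forall>z\<in>I. 0 \<le> b z" by blast
    then show "x + y \<in> ?C"
      by (intro CollectI exI[of _ "\<lambda>z. a z + b z"]) (simp add: sum.distrib scaleR_add_left)
  next
    fix x and t :: real assume "x \<in> ?C" "0 \<le> t"
    then obtain a where "x = (\<Sum>z\<in>I. a z *\<^sub>R w z)" "\<forall>z\<in>I. 0 \<le> a z" by blast
    with \<open>0 \<le> t\<close> show "t *\<^sub>R x \<in> ?C"
      by (intro CollectI exI[of _ "\<lambda>z. t * a z"]) (simp add: scaleR_sum_right)
  qed
  moreover have "w ` I \<subseteq> ?C"
  proof
    fix b assume "b \<in> w ` I"
    then obtain y where "y \<in> I" "b = w y" by blast
    moreover have "(\<Sum>z\<in>I. (if z = y then 1 else 0) *\<^sub>R w z) = w y"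
      using \<open>y \<in> I\<close> assms by (simp add: if_distrib[of "\<lambda>t. t *\<^sub>R _"] cong: if_cong)
    ultimately show "b \<in> ?C"
      by (intro CollectI exI[of _ "\<lambda>z. if z = y then 1 else 0"]) auto
  qed
  ultimately show "convex_cone hull (w ` I) \<subseteq> ?C"
    by (simp add: hull_minimal)
qed

lemma closure_positive_combinations:
  fixes w :: "'i \<Rightarrow> 'a::euclidean_space"
  assumes "finite I"
  shows "closure {\<Sum>x\<in>I. c x *\<^sub>R w x | c. \<forall>x\<in>I. 0 < c x}
       = {\<Sum>x\<in>I. c x *\<^sub>R w x | c. \<forall>x\<in>I. 0 \<le> c x}" (is "closure ?P = ?N")
proof
  have "closed ?N"
    unfolding nonneg_combinations_eq_convex_cone_hull[OF assms]
    using assms by (simp add: closed_convex_cone_hull)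
  then show "closure ?P \<subseteq> ?N"
    by (rule closure_minimal[rotated]) (auto intro: less_imp_le)
next
  show "?N \<subseteq> closure ?P"
  proof
    fix y assume "y \<in> ?N"
    then obtain c where y: "y = (\<Sum>x\<in>I. c x *\<^sub>R w x)" and c: "\<forall>x\<in>I. 0 \<le> c x" by blast
    define u where "u n = (\<Sum>x\<in>I. (c x + inverse (real (Suc n))) *\<^sub>R w x)" for n
    have "u n \<in> ?P" for n
      unfolding u_def using c
      by (intro CollectI exI[of _ "\<lambda>x. c x + inverse (real (Suc n))"]) (auto simp: add_nonneg_pos)
    moreover have "u \<longlonglongrightarrow> y"
      unfolding u_def y
      using tendsto_add[OF tendsto_const LIMSEQ_inverse_real_of_nat]
      by (intro tendsto_sum tendsto_scaleR tendsto_const) auto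
    ultimately show "y \<in> closure ?P"
      unfolding closure_sequential by blast
  qed
qed

lemma simplicial_cone_nonneg_combinations:
  fixes w :: "'i \<Rightarrow> 'a::real_vector"
  assumes fin: "finite I"
    and indep: "\<And>c. (\<Sum>x\<in>I. c x *\<^sub>R w x) = 0 \<Longrightarrow> \<forall>x\<in>I. c x = 0"
  shows "simplicial_cone {\<Sum>x\<in>I. c x *\<^sub>R w x | c. \<forall>x\<in>I. 0 \<le> c x}"
proof -
  have inj: "inj_on w I"
  proof (rule inj_onI, rule ccontr)
    fix x y assume xy: "x \<in> I" "y \<in> I" "w x = w y" "x \<noteq> y"
    define c where "c z = (if z = x then 1 else if z = y then -1 else (0::real))" for z
    have "c z *\<^sub>R w z = (if z = x then w x else 0) - (if z = y then w y else 0)" for z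
      using xy unfolding c_def by auto
    then have "(\<Sum>z\<in>I. c z *\<^sub>R w z) = 0"
      using xy fin by (simp add: sum_subtractf)
    with indep xy show False unfolding c_def by fastforce
  qed
  have "independent (w ` I)"
    unfolding dependent_finite[OF finite_imageI[OF fin]]
  proof (intro notI, elim exE conjE bexE)
    fix u v assume "v \<in> w ` I" "u v \<noteq> 0" and "(\<Sum>v\<in>w ` I. u v *\<^sub>R v) = 0"
    then have "(\<Sum>x\<in>I. (u \<circ> w) x *\<^sub>R w x) = 0"
      by (simp add: sum.reindex[OF inj])
    then have "\<forall>x\<in>I. u (w x) = 0"
      using indep[of "u \<circ> w"] by simp
    with \<open>v \<in> w ` I\<close> \<open>u v \<noteq> 0\<close> show False by auto
  qed
  moreover have "{\<Sum>b\<in>w ` I. c b *\<^sub>R b | c. \<forall>b\<in>w ` I. 0 \<le> c b}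
          = {\<Sum>x\<in>I. c x *\<^sub>R w x | c. \<forall>x\<in>I. 0 \<le> c x}"
  proof (intro equalityI subsetI)
    fix y assume "y \<in> {\<Sum>b\<in>w ` I. c b *\<^sub>R b | c. \<forall>b\<in>w ` I. 0 \<le> c b}"
    then obtain c where "y = (\<Sum>b\<in>w ` I. c b *\<^sub>R b)" "\<forall>b\<in>w ` I. 0 \<le> c b" by blast
    then show "y \<in> {\<Sum>x\<in>I. c x *\<^sub>R w x | c. \<forall>x\<in>I. 0 \<le> c x}"
      by (intro CollectI exI[of _ "c \<circ> w"]) (simp add: sum.reindex[OF inj])
  next
    fix y assume "y \<in> {\<Sum>x\<in>I. c x *\<^sub>R w x | c. \<forall>x\<in>I. 0 \<le> c x}"
    then obtain c where "y = (\<Sum>x\<in>I. c x *\<^sub>R w x)" "\<forall>x\<in>I. 0 \<le> c x" by blast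
    then show "y \<in> {\<Sum>b\<in>w ` I. c b *\<^sub>R b | c. \<forall>b\<in>w ` I. 0 \<le> c b}"
      by (intro CollectI exI[of _ "c \<circ> inv_into I w"])
         (simp add: sum.reindex[OF inj] inv_into_f_f[OF inj])
  qed
  ultimately show ?thesis
    unfolding simplicial_cone_def using fin by (intro exI[of _ "w ` I"]) auto
qed

lemma simplicial_cone_closure_positive_combinations:
  fixes w :: "'i \<Rightarrow> 'a::euclidean_space"
  assumes "finite I"
    and "\<And>c. (\<Sum>x\<in>I. c x *\<^sub>R w x) = 0 \<Longrightarrow> \<forall>x\<in>I. c x = 0"
  shows "simplicial_cone (closure {\<Sum>x\<in>I. c x *\<^sub>R w x | c. \<forall>x\<in>I. 0 < c x})"
  unfolding closure_positive_combinations[OF assms(1)]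
  using simplicial_cone_nonneg_combinations[OF assms] .

lemma trank_less_trank:
  assumes "finite Vs" "x \<in> f ` Vs" "y \<in> f ` Vs" "x < y"
  shows "trank f Vs x < trank f Vs y"
proof -
  have "{z \<in> f ` Vs. z < x} \<subset> {z \<in> f ` Vs. z < y}" using assms by auto
  then show ?thesis
    unfolding trank_def using assms(1) by (simp add: psubset_card_mono)
qed

lemma trank_le_trank_iff:
  assumes "finite Vs" "x \<in> f ` Vs" "y \<in> f ` Vs"
  shows "trank f Vs x \<le> trank f Vs y \<longleftrightarrow> x \<le> y"
  using trank_less_trank[OF assms] trank_less_trank[OF assms(1,3,2)]
  by (metis leD le_less linorder_le_less_linear)

lemma inj_on_trank: "finite Vs \<Longrightarrow> inj_on (trank f Vs) (f ` Vs)"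
  by (rule inj_onI) (metis trank_le_trank_iff order_antisym order_refl)

lemma trank_less_card:
  assumes "finite Vs" "x \<in> f ` Vs"
  shows "trank f Vs x < card (f ` Vs)"
proof -
  have "{z \<in> f ` Vs. z < x} \<subset> f ` Vs" using assms by auto
  then show ?thesis unfolding trank_def using assms by (simp add: psubset_card_mono)
qed

lemma trank_image:
  assumes "finite Vs"
  shows "trank f Vs ` f ` Vs = {..<card (f ` Vs)}"
proof -
  have "trank f Vs ` f ` Vs \<subseteq> {..<card (f ` Vs)}"
    using trank_less_card[OF assms] by auto
  moreover have "card (trank f Vs ` f ` Vs) = card (f ` Vs)"
    using card_image[OF inj_on_trank[OF assms]] .
  ultimately show ?thesis by (simp add: card_subset_eq)
qed

lemma
  fixes \<phi> :: "real \<Rightarrow> real"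
  assumes "finite Vs" and mono: "strict_mono_on (f ` Vs) \<phi>"
  shows trank_strict_mono_comp: "v \<in> Vs \<Longrightarrow> trank (\<lambda>u. \<phi> (f u)) Vs (\<phi> (f v)) = trank f Vs (f v)"
    and card_strict_mono_comp_image: "card ((\<lambda>u. \<phi> (f u)) ` Vs) = card (f ` Vs)"
proof -
  have inj: "inj_on \<phi> (f ` Vs)"
    using mono by (rule strict_mono_on_imp_inj_on)
  have img: "(\<lambda>u. \<phi> (f u)) ` Vs = \<phi> ` f ` Vs" by auto
  show "card ((\<lambda>u. \<phi> (f u)) ` Vs) = card (f ` Vs)"
    unfolding img using card_image[OF inj] .
  assume "v \<in> Vs"
  then have "{z \<in> \<phi> ` f ` Vs. z < \<phi> (f v)} = \<phi> ` {z \<in> f ` Vs. z < f v}"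
    using mono by (auto simp: strict_mono_on_less)
  then show "trank (\<lambda>u. \<phi> (f u)) Vs (\<phi> (f v)) = trank f Vs (f v)"
    unfolding trank_def img by (simp add: card_image inj_on_subset[OF inj])
qed

definition level :: "('v \<Rightarrow> real) \<Rightarrow> 'v set \<Rightarrow> nat \<Rightarrow> real" where
  "level f Vs = inv_into (f ` Vs) (trank f Vs)"

lemma level_trank: "finite Vs \<Longrightarrow> v \<in> Vs \<Longrightarrow> level f Vs (trank f Vs (f v)) = f v"
  unfolding level_def by (simp add: inj_on_trank)

lemma level_strict_mono:
  assumes "finite Vs" "i < j" "j < card (f ` Vs)"
  shows "level f Vs i < level f Vs j"
proof -
  have mem: "level f Vs m \<in> f ` Vs" and rank: "trank f Vs (level f Vs m) = m"
    if "m < card (f ` Vs)" for m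
    using that trank_image[OF assms(1), of f] unfolding level_def
    by (auto intro: inv_into_into f_inv_into_f)
  show ?thesis
    using trank_le_trank_iff[OF assms(1) mem mem] rank assms(2,3) by (metis leD le_less_linear order.strict_trans)
qed

lemma setcompr_cong1:
  "(\<And>x. P x = P' x) \<Longrightarrow> (\<And>x. P' x \<Longrightarrow> t x = t' x) \<Longrightarrow> {t x | x. P x} = {t' x | x. P' x}"
  by (intro equalityI subsetI; clarsimp; metis)

lemma setcompr_cong2:
  "(\<And>x y. P x y = P' x y) \<Longrightarrow> (\<And>x y. P' x y \<Longrightarrow> t x y = t' x y)
    \<Longrightarrow> {t x y | x y. P x y} = {t' x y | x y. P' x y}"
  by (intro equalityI subsetI; clarsimp; metis)

lemma rubber_type_cong_trank:
  assumes ends: "\<forall>e\<in>E. src e \<in> Vs \<and> tgt e \<in> Vs" and legs: "\<forall>j<n. leg j \<in> Vs"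
    and trank_eq: "\<And>v. v \<in> Vs \<Longrightarrow> trank f Vs (f v) = trank f' Vs (f' v)"
    and card_eq: "card (f ` Vs) = card (f' ` Vs)"
  shows "rubber_type Vs E src tgt h leg n Vv f s = rubber_type Vs E src tgt h leg n Vv f' s"
proof -
  have src: "e \<in> E \<Longrightarrow> trank f Vs (f (src e)) = trank f' Vs (f' (src e))"
    and tgt: "e \<in> E \<Longrightarrow> trank f Vs (f (tgt e)) = trank f' Vs (f' (tgt e))"
    and leg: "j < n \<Longrightarrow> trank f Vs (f (leg j)) = trank f' Vs (f' (leg j))" for e j
    using ends legs trank_eq by auto
  show ?thesis
    unfolding rubber_type_def Let_def card_eq
    apply (intro arg_cong2[where f=Pair] refl)
    subgoal
      apply (intro arg_cong2[where f="(\<union>)"])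
      subgoal using trank_eq by auto
      subgoal by (intro Collect_cong ex_cong1 conj_cong refl; simp add: src tgt)
      subgoal by (intro Collect_cong ex_cong1 conj_cong refl; simp add: leg)
      done
    subgoal
      by (intro arg_cong2[where f="(\<union>)"];
          rule setcompr_cong2 setcompr_cong1; simp add: src tgt leg cong: conj_cong)
    subgoal
      by (intro arg_cong2[where f="(\<union>)"];
          rule setcompr_cong2 setcompr_cong1; simp add: src tgt leg cong: conj_cong)
    done
qed

lemma rubber_type_eq_imp_trank_eq:
  assumes "rubber_type Vs E src tgt h leg n Vv f s = rubber_type Vs E src tgt h leg n Vv f' s'"
  shows "card (f ` Vs) = card (f' ` Vs)"
    and "v \<in> Vs \<Longrightarrow> trank f Vs (f v) = trank f' Vs (f' v)"
proof -
  show "card (f ` Vs) = card (f' ` Vs)"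
    using arg_cong[OF assms, of fst] unfolding rubber_type_def Let_def by simp
  assume "v \<in> Vs"
  then have "(OrigV v, h v, trank f' Vs (f' v)) \<in> fst (snd (rubber_type Vs E src tgt h leg n Vv f s))"
    unfolding assms unfolding rubber_type_def Let_def by auto
  then show "trank f Vs (f v) = trank f' Vs (f' v)"
    unfolding rubber_type_def Let_def by auto
qed

lemma rubber_type_eq_imp_slope_eq:
  assumes eq: "rubber_type Vs E src tgt h leg n Vv f s = rubber_type Vs E src tgt h leg n Vv f' s'"
    and "e \<in> E"
    and "0 < s' e \<and> trank f' Vs (f' (src e)) < trank f' Vs (f' (tgt e))
       \<or> s' e < 0 \<and> trank f' Vs (f' (tgt e)) < trank f' Vs (f' (src e))"
  shows "s e = s' e"
proof -
  let ?i = "min (trank f' Vs (f' (src e))) (trank f' Vs (f' (tgt e)))"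
  obtain a b where "(EPiece e ?i, a, b, TEdge ?i, s' e)
      \<in> fst (snd (snd (rubber_type Vs E src tgt h leg n Vv f' s')))"
    using assms(2,3) unfolding rubber_type_def Let_def by (auto simp: min_def)
  then have "(EPiece e ?i, a, b, TEdge ?i, s' e) \<in> fst (snd (snd (rubber_type Vs E src tgt h leg n Vv f s)))"
    unfolding eq .
  then show ?thesis
    unfolding rubber_type_def Let_def by auto
qed

locale fixed_rubber_type =
  fixes Vs :: "'v set" and E :: "'e::finite set" and src tgt :: "'e \<Rightarrow> 'v"
    and h :: "'v \<Rightarrow> nat" and leg :: "nat \<Rightarrow> 'v" and n :: nat and Vv :: "nat \<Rightarrow> int"
    and p0 :: "real ^ 'e" and f0 :: "'v \<Rightarrow> real" and s0 :: "'e \<Rightarrow> int"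
  assumes finite_vertices: "finite Vs"
    and vertices_nonempty: "Vs \<noteq> {}"
    and ends_in_vertices: "\<forall>e\<in>E. src e \<in> Vs \<and> tgt e \<in> Vs"
    and legs_in_vertices: "\<forall>j<n. leg j \<in> Vs"
    and connected: "\<forall>u\<in>Vs. \<forall>w\<in>Vs.
          (u, w) \<in> ({(src e, tgt e) | e. e \<in> E} \<union> {(tgt e, src e) | e. e \<in> E})\<^sup>*"
    and p0_interior: "p0 \<in> cone_interior E"
    and p0_balanced: "balanced Vs E src tgt leg n Vv p0 f0 s0"
begin

definition rank :: "'v \<Rightarrow> nat" where
  "rank v = trank f0 Vs (f0 v)"

definition levels :: nat where
  "levels = card (f0 ` Vs)"

definition flat_edges :: "'e set" where
  "flat_edges = {e \<in> E. s0 e = 0}"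

definition type_locus :: "(real ^ 'e) set" where
  "type_locus = {p \<in> cone_interior E. \<exists>f s. balanced Vs E src tgt leg n Vv p f s \<and>
       rubber_type Vs E src tgt h leg n Vv f s = rubber_type Vs E src tgt h leg n Vv f0 s0}"

text \<open>The ray \<open>Inl i\<close> lengthens the \<open>i\<close>-th bounded edge of the target by one, which lengthens
  every edge of slope \<open>s\<close> stretched over it by \<open>1 / \<bar>s\<bar>\<close> (edges of slope 0 are stretched over
  nothing, since their ends have equal rank); the ray \<open>Inr e\<close> lengthens the contracted
  edge \<open>e\<close>.\<close>

definition generator_index :: "(nat + 'e) set" where
  "generator_index = Inl ` {..<levels - 1} \<union> Inr ` flat_edges"

definition generator :: "nat + 'e \<Rightarrow> real ^ 'e" where
  "generator x = (case x of
       Inl i \<Rightarrow> (\<chi> e. if e \<in> E \<and> min (rank (src e)) (rank (tgt e)) \<le> i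
                          \<and> i < max (rank (src e)) (rank (tgt e))
                     then 1 / \<bar>real_of_int (s0 e)\<bar> else 0)
     | Inr e \<Rightarrow> axis e 1)"

definition combination :: "(nat + 'e \<Rightarrow> real) \<Rightarrow> real ^ 'e" where
  "combination c = (\<Sum>x\<in>generator_index. c x *\<^sub>R generator x)"

text \<open>The value at the \<open>j\<close>-th vertex of the target of the balanced function attached to the
  coefficients \<open>c\<close>, normalised to vanish at the lowest vertex.\<close>

definition height :: "(nat + 'e \<Rightarrow> real) \<Rightarrow> nat \<Rightarrow> real" where
  "height c j = (\<Sum>i<j. c (Inl i))"

lemma rank_image: "rank ` Vs = {..<levels}"
  using trank_image[OF finite_vertices, of f0]
  unfolding rank_def levels_def by (simp add: image_image)

lemma rank_less_levels: "v \<in> Vs \<Longrightarrow> rank v < levels"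
  using rank_image by auto

lemma rank_le_rank_iff: "u \<in> Vs \<Longrightarrow> v \<in> Vs \<Longrightarrow> rank u \<le> rank v \<longleftrightarrow> f0 u \<le> f0 v"
  unfolding rank_def using trank_le_trank_iff[OF finite_vertices] by blast

lemma f0_edge_diff: "e \<in> E \<Longrightarrow> f0 (tgt e) - f0 (src e) = of_int (s0 e) * p0 $ e"
  using p0_balanced unfolding balanced_def by blast

lemma p0_pos: "e \<in> E \<Longrightarrow> 0 < p0 $ e"
  using p0_interior unfolding cone_interior_def by blast

lemma rank_src_less_tgt: "e \<in> E \<Longrightarrow> 0 < s0 e \<Longrightarrow> rank (src e) < rank (tgt e)"
  using f0_edge_diff[of e] p0_pos[of e] rank_le_rank_iff ends_in_vertices
  by (smt (verit) mult_pos_pos of_int_pos not_le)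

lemma rank_tgt_less_src: "e \<in> E \<Longrightarrow> s0 e < 0 \<Longrightarrow> rank (tgt e) < rank (src e)"
  using f0_edge_diff[of e] p0_pos[of e] rank_le_rank_iff ends_in_vertices
  by (smt (verit) mult_neg_pos of_int_less_0_iff not_le)

lemma rank_flat: "e \<in> E \<Longrightarrow> s0 e = 0 \<Longrightarrow> rank (tgt e) = rank (src e)"
  using f0_edge_diff[of e] unfolding rank_def by simp

lemma height_diff: "a \<le> b \<Longrightarrow> height c b - height c a = (\<Sum>i\<in>{a..<b}. c (Inl i))"
  using sum_diff_nat_ivl[of 0 a b "\<lambda>i. c (Inl i)"] unfolding height_def by (simp add: atLeast0LessThan)

lemma height_slope_quotient:
  assumes "e \<in> E"
  shows "(height c (max (rank (src e)) (rank (tgt e))) - height c (min (rank (src e)) (rank (tgt e))))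
           / \<bar>real_of_int (s0 e)\<bar>
       = (height c (rank (tgt e)) - height c (rank (src e))) / s0 e"
proof -
  consider "0 < s0 e" | "s0 e < 0" | "s0 e = 0" by linarith
  then show ?thesis
  proof cases
    case 1
    with rank_src_less_tgt[OF assms] show ?thesis by (simp add: max_def min_def)
  next
    case 2
    with rank_tgt_less_src[OF assms] show ?thesis
      by (simp add: max_def min_def) (metis divide_minus_right minus_diff_eq minus_divide_left)
  qed simp
qed

text \<open>On a contracted edge the first summand is \<open>0 / 0 = 0\<close>.\<close>

lemma combination_nth:
  "combination c $ e =
     (if e \<in> E then (height c (rank (tgt e)) - height c (rank (src e))) / s0 e else 0)
     + (if e \<in> flat_edges then c (Inr e) else 0)"
proof -
  let ?lo = "min (rank (src e)) (rank (tgt e))" and ?hi = "max (rank (src e)) (rank (tgt e))"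
  have "combination c $ e
      = (\<Sum>i<levels - 1. c (Inl i) * generator (Inl i) $ e)
        + (\<Sum>e'\<in>flat_edges. c (Inr e') * generator (Inr e') $ e)"
    unfolding combination_def generator_index_def
    by (subst sum.union_disjoint) (auto simp: sum.reindex)
  also have "(\<Sum>e'\<in>flat_edges. c (Inr e') * generator (Inr e') $ e)
      = (if e \<in> flat_edges then c (Inr e) else 0)"
    by (simp add: generator_def axis_def if_distrib[of "\<lambda>t. c _ * t"] cong: if_cong)
  also have "(\<Sum>i<levels - 1. c (Inl i) * generator (Inl i) $ e)
      = (if e \<in> E then (height c (rank (tgt e)) - height c (rank (src e))) / s0 e else 0)"
  proof (cases "e \<in> E")
    case True
    then have "?hi \<le> levels - 1"
      using rank_less_levels ends_in_vertices by fastforce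
    then have restrict: "{..<levels - 1} \<inter> {?lo..<?hi} = {?lo..<?hi}" by auto
    have "(\<Sum>i<levels - 1. c (Inl i) * generator (Inl i) $ e)
        = (\<Sum>i<levels - 1. if i \<in> {?lo..<?hi} then c (Inl i) / \<bar>real_of_int (s0 e)\<bar> else 0)"
      using True by (intro sum.cong) (auto simp: generator_def)
    also have "\<dots> = (\<Sum>i\<in>{?lo..<?hi}. c (Inl i)) / \<bar>real_of_int (s0 e)\<bar>"
      unfolding sum.inter_restrict[OF finite_lessThan, symmetric] restrict by (simp add: sum_divide_distrib)
    also have "\<dots> = (height c ?hi - height c ?lo) / \<bar>real_of_int (s0 e)\<bar>"
      using height_diff[of ?lo ?hi c] by simp
    also have "\<dots> = (height c (rank (tgt e)) - height c (rank (src e))) / s0 e"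
      by (rule height_slope_quotient[OF True])
    finally show ?thesis using True by simp
  qed (simp add: generator_def)
  finally show ?thesis .
qed

lemma type_locus_subset_positive_combinations:
  "type_locus \<subseteq> {combination c | c. \<forall>x\<in>generator_index. 0 < c x}"
proof
  fix p assume "p \<in> type_locus"
  then obtain f s where p_interior: "p \<in> cone_interior E"
    and bal: "balanced Vs E src tgt leg n Vv p f s"
    and same_type: "rubber_type Vs E src tgt h leg n Vv f s = rubber_type Vs E src tgt h leg n Vv f0 s0"
    unfolding type_locus_def by blast
  have card_f: "card (f ` Vs) = levels"
    using rubber_type_eq_imp_trank_eq(1)[OF same_type] unfolding levels_def .
  have f_level: "f v = level f Vs (rank v)" if "v \<in> Vs" for v
    using level_trank[OF finite_vertices that, of f] rubber_type_eq_imp_trank_eq(2)[OF same_type that]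
    unfolding rank_def by simp
  have slope: "s e = s0 e" if "e \<in> E" "s0 e \<noteq> 0" for e
    using rubber_type_eq_imp_slope_eq[OF same_type that(1)]
      rank_src_less_tgt[OF that(1)] rank_tgt_less_src[OF that(1)] that(2)
    unfolding rank_def by linarith
  \<comment> \<open>the edge lengths of the target and the lengths of the contracted edges\<close>
  define c where "c x = (case x of Inl i \<Rightarrow> level f Vs (Suc i) - level f Vs i | Inr e \<Rightarrow> p $ e)" for x
  have height_c: "height c j = level f Vs j - level f Vs 0" for j
    unfolding height_def c_def by (simp add: sum_lessThan_telescope)
  have "\<forall>x\<in>generator_index. 0 < c x"
    using level_strict_mono[OF finite_vertices, of _ _ f] card_f p_interior
    unfolding generator_index_def flat_edges_def cone_interior_def c_def by auto
  moreover have "p = combination c"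
  proof (rule vec_eq_iff[THEN iffD2], intro allI)
    fix e
    show "p $ e = combination c $ e"
    proof (cases "e \<in> E")
      case False
      with p_interior show ?thesis
        by (simp add: combination_nth cone_interior_def flat_edges_def)
    next
      case True
      have "f (tgt e) - f (src e) = s e * p $ e"
        using bal True unfolding balanced_def by blast
      with True show ?thesis
        using ends_in_vertices f_level slope
        by (cases "s0 e = 0") (auto simp: combination_nth flat_edges_def height_c c_def)
    qed
  qed
  ultimately show "p \<in> {combination c | c. \<forall>x\<in>generator_index. 0 < c x}"
    by blast
qed

lemma height_strict_mono:
  assumes "\<forall>x\<in>generator_index. 0 < c x" "a < b" "b < levels"
  shows "height c a < height c b"
proof -
  have "0 < (\<Sum>i\<in>{a..<b}. c (Inl i))"
    using assms by (intro sum_pos) (auto simp: generator_index_def)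
  then show ?thesis
    using height_diff[of a b c] assms(2) by simp
qed

lemma combination_in_cone_interior:
  assumes c_pos: "\<forall>x\<in>generator_index. 0 < c x"
  shows "combination c \<in> cone_interior E"
  unfolding cone_interior_def
proof (intro CollectI allI conjI impI)
  fix e assume e: "e \<in> E"
  then have ends: "src e \<in> Vs" "tgt e \<in> Vs" using ends_in_vertices by auto
  have increasing: "height c (rank u) < height c (rank v)" if "u \<in> Vs" "v \<in> Vs" "rank u < rank v" for u v
    using height_strict_mono[OF c_pos] rank_less_levels that by blast
  consider "0 < s0 e" | "s0 e < 0" | "s0 e = 0" by linarith
  then show "0 < combination c $ e"
  proof cases
    case 1
    with increasing[OF ends rank_src_less_tgt[OF e]] e show ?thesis
      by (simp add: combination_nth flat_edges_def)
  next
    case 2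
    with increasing[OF ends(2,1) rank_tgt_less_src[OF e]] e show ?thesis
      by (simp add: combination_nth flat_edges_def divide_neg_neg)
  next
    case 3
    with e c_pos show ?thesis
      by (simp add: combination_nth flat_edges_def generator_index_def)
  qed
next
  fix e assume "e \<notin> E"
  then show "combination c $ e = 0"
    by (simp add: combination_nth flat_edges_def)
qed

lemma combination_balanced:
  "balanced Vs E src tgt leg n Vv (combination c) (\<lambda>v. height c (rank v)) s0"
  unfolding balanced_def
proof (intro conjI ballI)
  fix e assume "e \<in> E"
  then show "height c (rank (tgt e)) - height c (rank (src e)) = of_int (s0 e) * combination c $ e"
    using rank_flat by (cases "s0 e = 0") (simp_all add: combination_nth flat_edges_def)
next
  fix v assume "v \<in> Vs"
  with p0_balanced show "(\<Sum>e\<in>{e\<in>E. src e = v}. s0 e) - (\<Sum>e\<in>{e\<in>E. tgt e = v}. s0 e)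
      + (\<Sum>j\<in>{j. j < n \<and> leg j = v}. Vv j) = 0"
    unfolding balanced_def by blast
qed

lemma rubber_type_height:
  assumes c_pos: "\<forall>x\<in>generator_index. 0 < c x"
  shows "rubber_type Vs E src tgt h leg n Vv (\<lambda>v. height c (rank v)) s0
       = rubber_type Vs E src tgt h leg n Vv f0 s0"
proof -
  define \<phi> where "\<phi> x = height c (trank f0 Vs x)" for x
  have mono: "strict_mono_on (f0 ` Vs) \<phi>"
  proof (rule strict_mono_onI)
    fix x y assume "x \<in> f0 ` Vs" "y \<in> f0 ` Vs" "x < y"
    then show "\<phi> x < \<phi> y"
      unfolding \<phi>_def using trank_less_trank[OF finite_vertices] trank_less_card[OF finite_vertices]
      by (intro height_strict_mono[OF c_pos]) (auto simp: levels_def)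
  qed
  show ?thesis
    unfolding rank_def \<phi>_def[symmetric]
    by (rule rubber_type_cong_trank[OF ends_in_vertices legs_in_vertices
          trank_strict_mono_comp[OF finite_vertices mono] card_strict_mono_comp_image[OF finite_vertices mono]])
qed

lemma positive_combination_in_type_locus:
  "\<forall>x\<in>generator_index. 0 < c x \<Longrightarrow> combination c \<in> type_locus"
  unfolding type_locus_def
  using combination_in_cone_interior combination_balanced rubber_type_height by blast

lemma generators_independent:
  assumes "combination c = 0"
  shows "\<forall>x\<in>generator_index. c x = 0"
proof -
  have nth: "combination c $ e = 0" for e
    using assms by simp
  have flat_coeff: "c (Inr e) = 0" if "e \<in> flat_edges" for e
    using nth[of e] that by (simp add: combination_nth flat_edges_def)
  have edge: "height c (rank (src e)) = height c (rank (tgt e))" if "e \<in> E" for e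
  proof (cases "s0 e = 0")
    case True
    then show ?thesis using rank_flat[OF that] by simp
  next
    case False
    then show ?thesis
      using nth[of e] that by (simp add: combination_nth flat_edges_def)
  qed
  have path: "height c (rank u) = height c (rank v)"
    if "(u, v) \<in> ({(src e, tgt e) | e. e \<in> E} \<union> {(tgt e, src e) | e. e \<in> E})\<^sup>*" for u v
    using that
  proof (induction rule: rtrancl_induct)
    case (step y z)
    then obtain e where "e \<in> E" "(y, z) = (src e, tgt e) \<or> (y, z) = (tgt e, src e)" by blast
    with step.IH edge[of e] show ?case by auto
  qed simp
  obtain v0 where "v0 \<in> Vs" using vertices_nonempty by blast
  have const: "height c j = height c (rank v0)" if "j < levels" for j
  proof -
    have "j \<in> rank ` Vs" using that rank_image by simp
    then obtain u where "u \<in> Vs" "rank u = j" by blast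
    with path[OF connected[rule_format, OF \<open>u \<in> Vs\<close> \<open>v0 \<in> Vs\<close>]] show ?thesis by simp
  qed
  show ?thesis
  proof
    fix x assume "x \<in> generator_index"
    then consider (Inl) i where "x = Inl i" "i < levels - 1"
      | (Inr) e where "x = Inr e" "e \<in> flat_edges"
      unfolding generator_index_def by blast
    then show "c x = 0"
    proof cases
      case Inl
      then have "height c (Suc i) = height c i" using const[of i] const[of "Suc i"] by simp
      with Inl show ?thesis unfolding height_def by simp
    next
      case Inr
      with flat_coeff show ?thesis by simp
    qed
  qed
qed

lemma simplicial_cone_closure_type_locus: "simplicial_cone (closure type_locus)"
proof -
  have "type_locus = {combination c | c. \<forall>x\<in>generator_index. 0 < c x}"
    using type_locus_subset_positive_combinations positive_combination_in_type_locus by blast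
  moreover have "finite generator_index"
    unfolding generator_index_def by simp
  ultimately show ?thesis
    using simplicial_cone_closure_positive_combinations[of generator_index generator]
      generators_independent
    unfolding combination_def by metis
qed

end

theorem mainTheorem11:
  fixes Vs :: "'v set" and E :: "'e::finite set" and src tgt :: "'e \<Rightarrow> 'v"
    and h :: "'v \<Rightarrow> nat" and leg :: "nat \<Rightarrow> 'v" and n g :: nat
    and Vv :: "nat \<Rightarrow> int"
    and p0 :: "real ^ 'e" and f0 :: "'v \<Rightarrow> real" and s0 :: "'e \<Rightarrow> int"
  assumes "stable_graph Vs E src tgt h leg n g"
    and "p0 \<in> cone_interior E"
    and "balanced Vs E src tgt leg n Vv p0 f0 s0"
  shows "simplicial_cone
           (closure {p \<in> cone_interior E. \<exists>f s. balanced Vs E src tgt leg n Vv p f s \<and>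
               rubber_type Vs E src tgt h leg n Vv f s = rubber_type Vs E src tgt h leg n Vv f0 s0})"
proof -
  interpret fixed_rubber_type Vs E src tgt h leg n Vv p0 f0 s0
    by (rule fixed_rubber_type.intro) (use assms in \<open>auto simp: stable_graph_def\<close>)
  show ?thesis
    using simplicial_cone_closure_type_locus unfolding type_locus_def .
qed

end
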